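(* Let $n\ge3$, $k\ge1$ be integers, $\alpha=n/2-1$, let $b>0>c$ satisfy $$bc=-\frac{(k+1)k(\alpha+k-1)}{(2\alpha+k)(2\alpha+k-1)(\alpha+k+1)},\qquad b+c=-\frac{2\alpha(k+1)^2(\alpha+k-1)}{(2\alpha+k)(2\alpha+k-1)(\alpha+2k+1)},$$ and let $\beta_1<\dots<\beta_{k+1}$ be the zeros of $P_{k+1}^{(n)}(t)+bP_{k-1}^{(n)}(t)$. Then the polynomial $g_k(t)=(t-\beta_1)(t-\beta_2)\cdots(t-\beta_k)$ has all Gegenbauer coefficients positive, i.e. $g_k=\sum_{i=0}^kc_iP_i^{(n)}$ with $c_i>0$ for $i=0,\dots,k$.
   Context: $P_i^{(n)}$ is the Gegenbauer polynomial of degree $i$ (Jacobi polynomial with parameters $(n-3)/2,(n-3)/2$, normalized $P_i^{(n)}(1)=1$). *)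

theory Defs
  imports "HOL-Computational_Algebra.Polynomial"
begin

text \<open>Gegenbauer polynomial P_i^{(n)} of degree i, normalized by P_i^{(n)}(1) = 1
  (Jacobi polynomial with parameters ((n-3)/2,(n-3)/2), normalized at 1), given by the
  standard three-term recurrence
  P_0 = 1, P_1 = t, (i+n-2) P_{i+1}(t) = (2i+n-2) t P_i(t) - i P_{i-1}(t).\<close>
fun gegen :: "nat \<Rightarrow> nat \<Rightarrow> real poly" where
  "gegen n 0 = 1"
| "gegen n (Suc 0) = [:0, 1:]"
| "gegen n (Suc (Suc i)) =
     smult (1 / (real (Suc i) + real n - 2))
       (smult (2 * real (Suc i) + real n - 2) ([:0, 1:] * gegen n (Suc i))
        - smult (real (Suc i)) (gegen n i))"

end

theory Submission
  imports Defs
begin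

(* Write f = P_(k+1) + b P_(k-1) (perturbed k b) and y = beta_(k+1) for its largest zero, so that
   g_k = f / (l (t - y)) with l the leading coefficient of f.  In the recurrence
   t P_j = u_j P_(j+1) + v_j P_(j-1) put w = v_k - b u_k; then t P_k = u_k f + w P_(k-1), so
   f(y) = 0 gives y P_k(y) = w P_(k-1)(y), and adding one term to the Christoffel-Darboux sum
   with weights m_i (weight i) yields
     (t - y) (w sum_(i<k) m_i P_i(y) P_i(t) + m_k v_k P_k(y) P_k(t)) = m_k v_k u_k P_k(y) f(t).
   The conditions on b + c and b c place v_k / u_k = k / (2 alpha + k) strictly above b, so
   w > 0.  Then f is negative at the largest zero of P_k, hence y lies beyond all zeros of
   P_0, ..., P_k and every P_i(y) is positive.  Only the positivity of the recurrence
   coefficients is used, so the argument is carried out for any such family. *)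

lemma poly_root_right:
  fixes q :: "real poly"
  assumes "lead_coeff q > 0" and "poly q z < 0"
  shows "\<exists>r>z. poly q r = 0"
proof -
  obtain N where N: "\<And>t. t \<ge> N \<Longrightarrow> poly q t \<ge> lead_coeff q"
    using poly_pinfty_gt_lc[OF assms(1)] by blast
  have "poly q (max N z + 1) > 0"
    using N[of "max N z + 1"] assms(1) by linarith
  then show ?thesis
    using poly_IVT_pos[of z "max N z + 1" q] assms(2) by force
qed

lemma poly_pos_right_of_roots:
  fixes q :: "real poly"
  assumes "lead_coeff q > 0" and "\<And>t. r < t \<Longrightarrow> poly q t \<noteq> 0" and "r < x"
  shows "poly q x > 0"
proof (rule ccontr)
  assume "\<not> poly q x > 0"
  then have "poly q x < 0"
    using assms(2,3) by force
  then show False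
    using poly_root_right[OF assms(1)] assms(2,3) by force
qed

lemma poly_largest_root_right:
  fixes q :: "real poly"
  assumes "lead_coeff q > 0" and "poly q z < 0"
  shows "\<exists>r>z. poly q r = 0 \<and> (\<forall>t. poly q t = 0 \<longrightarrow> t \<le> r)"
proof -
  define R where "R = {t. poly q t = 0}"
  have "finite R"
    unfolding R_def using assms(1) by (intro poly_roots_finite) auto
  obtain r where "r > z" "r \<in> R"
    using poly_root_right[OF assms] unfolding R_def by blast
  moreover have "Max R \<in> R" and "r \<le> Max R"
    using \<open>finite R\<close> \<open>r \<in> R\<close> by (auto intro: Max_in)
  ultimately have "Max R > z" and "poly q (Max R) = 0"
    unfolding R_def by auto
  then show ?thesis
    using \<open>finite R\<close> by (intro exI[of _ "Max R"]) (auto simp: R_def)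
qed

lemma smult_sum_right: "smult c (\<Sum>i\<in>A. f i) = (\<Sum>i\<in>A. smult c (f i))"
  by (induction A rule: infinite_finite_induct) (simp_all add: smult_add_right)

lemma poly_eq_smult_prod_distinct_roots:
  fixes q :: "'a::idom poly"
  assumes "finite I" and "inj_on \<beta> I" and "degree q = card I"
    and "\<And>i. i \<in> I \<Longrightarrow> poly q (\<beta> i) = 0"
  shows "q = smult (lead_coeff q) (\<Prod>i\<in>I. [:- \<beta> i, 1:])"
proof (rule poly_eqI_degree_lead_coeff[where n = "card I" and A = "\<beta> ` I"])
  have "degree (\<Prod>i\<in>I. [:- \<beta> i, 1:]) = card I"
    by (subst degree_prod_eq_sum_degree) auto
  moreover have "lead_coeff (\<Prod>i\<in>I. [:- \<beta> i, 1:]) = 1"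
    by (simp add: lead_coeff_prod)
  ultimately show "coeff q (card I) = coeff (smult (lead_coeff q) (\<Prod>i\<in>I. [:- \<beta> i, 1:])) (card I)"
    and "degree (smult (lead_coeff q) (\<Prod>i\<in>I. [:- \<beta> i, 1:])) \<le> card I"
    using assms(3) by auto
  show "card I \<le> card (\<beta> ` I)"
    using card_image[OF assms(2)] by simp
  show "degree q \<le> card I"
    using assms(3) by simp
  show "poly q z = poly (smult (lead_coeff q) (\<Prod>i\<in>I. [:- \<beta> i, 1:])) z" if "z \<in> \<beta> ` I" for z
    using that assms(1,4) by (auto simp: poly_prod)
qed

(* At j = 0 the term p (j - 1) is p 0, so the recurrence there only says p 1 = (x - v 0) / u 0. *)
locale three_term_recurrence =
  fixes p :: "nat \<Rightarrow> real poly" and u v :: "nat \<Rightarrow> real"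
  assumes p_0: "p 0 = 1"
    and recurrence: "[:0, 1:] * p j = smult (u j) (p (Suc j)) + smult (v j) (p (j - 1))"
    and u_pos: "u j > 0"
    and v_pos: "j \<ge> 1 \<Longrightarrow> v j > 0"
begin

lemma poly_recurrence:
  "x * poly (p j) x = u j * poly (p (Suc j)) x + v j * poly (p (j - 1)) x"
  using arg_cong[OF recurrence, of "\<lambda>q. poly q x"] by simp

lemma degree_and_lead_coeff: "degree (p j) = j \<and> lead_coeff (p j) > 0"
proof (induction j rule: less_induct)
  case (less j)
  show ?case
  proof (cases j)
    case 0
    then show ?thesis by (simp add: p_0)
  next
    case (Suc i)
    have IH: "degree (p i) = i" "lead_coeff (p i) > 0" "degree (p (i - 1)) < Suc i"
      using less[of i] less[of "i - 1"] Suc by auto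
    define q where "q = smult (- v i) (p (i - 1)) + [:0, 1:] * p i"
    have p_Suc: "p (Suc i) = smult (1 / u i) q"
      using recurrence[of i] u_pos[of i] by (simp add: q_def)
    have "p i \<noteq> 0"
      using IH(2) by auto
    then have x_times: "degree ([:0, 1:] * p i) = Suc i" "lead_coeff ([:0, 1:] * p i) = lead_coeff (p i)"
      using IH(1) by (simp_all add: degree_mult_eq lead_coeff_mult)
    have lower: "degree (smult (- v i) (p (i - 1))) < degree ([:0, 1:] * p i)"
      using IH(3) x_times(1) by simp
    have "lead_coeff q = lead_coeff (p i)"
      unfolding q_def lead_coeff_add_le[OF lower] by (fact x_times(2))
    moreover have "degree q = Suc i"
      unfolding q_def degree_add_eq_right[OF lower] by (fact x_times(1))
    ultimately show ?thesis
      using p_Suc Suc IH(2) u_pos[of i] by simp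
  qed
qed

lemma degree_p [simp]: "degree (p j) = j"
  using degree_and_lead_coeff by blast

lemma lead_coeff_p_pos: "lead_coeff (p j) > 0"
  using degree_and_lead_coeff by blast

(* For an orthogonal family, weight i is the reciprocal of the squared norm of p i. *)
primrec weight :: "nat \<Rightarrow> real" where
  "weight 0 = 1"
| "weight (Suc i) = weight i * u i / v (Suc i)"

lemma weight_pos: "weight i > 0"
  by (induction i) (simp_all add: u_pos v_pos)

lemma weight_Suc_mult: "weight (Suc i) * v (Suc i) = weight i * u i"
  using v_pos[of "Suc i"] by simp

lemma christoffel_darboux:
  "(x - y) * (\<Sum>i\<le>j. weight i * poly (p i) y * poly (p i) x) =
     weight j * u j * (poly (p j) y * poly (p (Suc j)) x - poly (p (Suc j)) y * poly (p j) x)"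
proof (induction j)
  case 0
  have "x - y = u 0 * poly (p 1) x - u 0 * poly (p 1) y"
    using poly_recurrence[of x 0] poly_recurrence[of y 0] by (simp add: p_0)
  then show ?case
    by (simp add: p_0 algebra_simps)
next
  case (Suc j)
  let ?P = "\<lambda>i t. poly (p i) t"
  have "(x - y) * (\<Sum>i\<le>Suc j. weight i * ?P i y * ?P i x)
      = (x - y) * (\<Sum>i\<le>j. weight i * ?P i y * ?P i x)
        + weight (Suc j) * (?P (Suc j) y * (x * ?P (Suc j) x) - ?P (Suc j) x * (y * ?P (Suc j) y))"
    by (simp add: algebra_simps del: weight.simps)
  also have "\<dots> = weight (Suc j) * v (Suc j) * (?P j y * ?P (Suc j) x - ?P (Suc j) y * ?P j x)
        + weight (Suc j) * (?P (Suc j) y * (u (Suc j) * ?P (Suc (Suc j)) x + v (Suc j) * ?P j x)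
                            - ?P (Suc j) x * (u (Suc j) * ?P (Suc (Suc j)) y + v (Suc j) * ?P j y))"
    unfolding Suc.IH poly_recurrence[of x "Suc j"] poly_recurrence[of y "Suc j"]
      weight_Suc_mult diff_Suc_1 ..
  also have "\<dots> = weight (Suc j) * u (Suc j)
        * (?P (Suc j) y * ?P (Suc (Suc j)) x - ?P (Suc (Suc j)) y * ?P (Suc j) x)"
    by (simp add: algebra_simps del: weight.simps)
  finally show ?case .
qed

lemma exists_largest_zero:
  assumes "k \<ge> 1"
  shows "\<exists>z. poly (p k) z = 0 \<and> (\<forall>x\<ge>z. \<forall>j<k. poly (p j) x > 0) \<and> (\<forall>x>z. poly (p k) x > 0)"
  using assms
proof (induction k rule: nat_induct_at_least)
  case base
  have "poly (p 1) x = (x - v 0) / u 0" for x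
    using poly_recurrence[of x 0] u_pos[of 0] by (simp add: p_0 field_simps)
  then show ?case
    using u_pos[of 0] by (intro exI[of _ "v 0"]) (auto simp: p_0)
next
  case (Suc k)
  then obtain z where z: "poly (p k) z = 0" "\<And>x j. z \<le> x \<Longrightarrow> j < k \<Longrightarrow> poly (p j) x > 0"
    "\<And>x. z < x \<Longrightarrow> poly (p k) x > 0"
    by blast
  have "u k * poly (p (Suc k)) z = - v k * poly (p (k - 1)) z"
    using poly_recurrence[of z k] z(1) by simp
  moreover have "v k * poly (p (k - 1)) z > 0"
    using v_pos[OF Suc.hyps] z(2)[of z "k - 1"] Suc.hyps by simp
  ultimately have "u k * poly (p (Suc k)) z < 0"
    by linarith
  then have "poly (p (Suc k)) z < 0"
    using u_pos[of k] by (simp add: mult_less_0_iff)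
  then obtain r where r: "r > z" "poly (p (Suc k)) r = 0" "\<And>t. poly (p (Suc k)) t = 0 \<Longrightarrow> t \<le> r"
    using poly_largest_root_right[OF lead_coeff_p_pos] by blast
  have "poly (p (Suc k)) t \<noteq> 0" if "t > r" for t
    using r(3) that by force
  then have "poly (p (Suc k)) x > 0" if "x > r" for x
    using poly_pos_right_of_roots[OF lead_coeff_p_pos] that by blast
  moreover have "poly (p j) x > 0" if "x \<ge> r" "j < Suc k" for x j
    using z(2,3) r(1) that by (cases "j = k") auto
  ultimately show ?case
    using r(2) by blast
qed

definition perturbed :: "nat \<Rightarrow> real \<Rightarrow> real poly" where
  "perturbed k b = p (k + 1) + smult b (p (k - 1))"

lemma poly_perturbed: "poly (perturbed k b) x = poly (p (k + 1)) x + b * poly (p (k - 1)) x"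
  by (simp add: perturbed_def)

lemma degree_perturbed: "degree (perturbed k b) = k + 1"
  and lead_coeff_perturbed: "lead_coeff (perturbed k b) = lead_coeff (p (k + 1))"
proof -
  have lower: "degree (smult b (p (k - 1))) < degree (p (k + 1))"
    by auto
  show "degree (perturbed k b) = k + 1"
    unfolding perturbed_def degree_add_eq_left[OF lower] by simp
  show "lead_coeff (perturbed k b) = lead_coeff (p (k + 1))"
    unfolding perturbed_def add.commute[of "p (k + 1)"] lead_coeff_add_le[OF lower] ..
qed

lemma p_pos_at_largest_root_of_perturbed:
  assumes "k \<ge> 1" and "b * u k < v k"
    and root: "poly (perturbed k b) y = 0"
    and largest: "\<And>t. poly (perturbed k b) t = 0 \<Longrightarrow> t \<le> y"
    and "j \<le> k"
  shows "poly (p j) y > 0"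
proof -
  obtain z where z: "poly (p k) z = 0" "\<And>x j. z \<le> x \<Longrightarrow> j < k \<Longrightarrow> poly (p j) x > 0"
    "\<And>x. z < x \<Longrightarrow> poly (p k) x > 0"
    using exists_largest_zero[OF assms(1)] by blast
  have "u k * poly (perturbed k b) z = (b * u k - v k) * poly (p (k - 1)) z"
    using poly_recurrence[of z k] z(1) by (simp add: poly_perturbed algebra_simps)
  moreover have "poly (p (k - 1)) z > 0"
    using z(2) assms(1) by simp
  ultimately have "u k * poly (perturbed k b) z < 0"
    using assms(2) by (simp add: mult_neg_pos)
  then have "poly (perturbed k b) z < 0"
    using u_pos[of k] by (simp add: mult_less_0_iff)
  moreover have "lead_coeff (perturbed k b) > 0"
    using lead_coeff_p_pos[of "k + 1"] by (simp only: lead_coeff_perturbed)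
  ultimately obtain r where "r > z" "poly (perturbed k b) r = 0"
    using poly_root_right by blast
  then have "y > z"
    using largest by force
  then show ?thesis
    using z(2,3) assms(5) by (cases "j = k") auto
qed

definition kernel_coeff :: "nat \<Rightarrow> real \<Rightarrow> real \<Rightarrow> nat \<Rightarrow> real" where
  "kernel_coeff k b y i = (if i < k then (v k - b * u k) * weight i else weight k * v k) * poly (p i) y"

lemma kernel_identity:
  assumes "k \<ge> 1" and root: "poly (perturbed k b) y = 0"
  shows "(x - y) * (\<Sum>i\<le>k. kernel_coeff k b y i * poly (p i) x) =
    weight k * v k * u k * poly (p k) y * poly (perturbed k b) x"
proof -
  obtain j where k: "k = Suc j"
    using assms(1) by (cases k) auto
  let ?P = "\<lambda>i t. poly (p i) t" and ?w = "v k - b * u k"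
  define S where "S = (\<Sum>i<k. weight i * ?P i y * ?P i x)"
  have cd: "(x - y) * S = weight k * v k * (?P j y * ?P k x - ?P k y * ?P j x)"
    using christoffel_darboux[of x y j] unfolding S_def k weight_Suc_mult lessThan_Suc_atMost .
  have recurrence_perturbed: "t * ?P k t = u k * poly (perturbed k b) t + ?w * ?P j t" for t
    using poly_recurrence[of t k] by (simp add: k poly_perturbed algebra_simps)
  have at_y: "y * ?P k y = ?w * ?P j y"
    using recurrence_perturbed[of y] root by simp
  note at_x = recurrence_perturbed[of x]
  have expand: "(\<Sum>i\<le>k. kernel_coeff k b y i * ?P i x) = ?w * S + weight k * v k * ?P k y * ?P k x"
    by (simp add: S_def kernel_coeff_def lessThan_Suc_atMost[symmetric] k sum_distrib_left algebra_simps)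
  have "(x - y) * (\<Sum>i\<le>k. kernel_coeff k b y i * ?P i x)
      = ?w * ((x - y) * S) + weight k * v k * (?P k y * (x * ?P k x) - ?P k x * (y * ?P k y))"
    unfolding expand by (simp add: algebra_simps)
  also have "\<dots> = weight k * v k * u k * ?P k y * poly (perturbed k b) x"
    unfolding cd at_x at_y by (simp add: algebra_simps)
  finally show ?thesis .
qed

lemma perturbed_kernel_factorization:
  assumes "k \<ge> 1" and "poly (perturbed k b) y = 0"
  shows "smult (weight k * v k * u k * poly (p k) y) (perturbed k b) =
    [:- y, 1:] * (\<Sum>i\<le>k. smult (kernel_coeff k b y i) (p i))"
proof (rule poly_ext)
  fix x
  show "poly (smult (weight k * v k * u k * poly (p k) y) (perturbed k b)) x =
    poly ([:- y, 1:] * (\<Sum>i\<le>k. smult (kernel_coeff k b y i) (p i))) x"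
    using kernel_identity[OF assms, of x] by (simp add: poly_sum algebra_simps)
qed

theorem quotient_positive_expansion:
  assumes "k \<ge> 1" and "b * u k < v k"
    and root: "poly (perturbed k b) y = 0"
    and largest: "\<And>t. poly (perturbed k b) t = 0 \<Longrightarrow> t \<le> y"
    and quotient: "perturbed k b = [:- y, 1:] * g"
  shows "\<exists>cs. (\<forall>i\<le>k. cs i > 0) \<and> g = (\<Sum>i\<le>k. smult (cs i) (p i))"
proof -
  have p_pos: "poly (p j) y > 0" if "j \<le> k" for j
    using p_pos_at_largest_root_of_perturbed[OF assms(1,2) root largest that] .
  define C where "C = weight k * v k * u k * poly (p k) y"
  have "C > 0"
    unfolding C_def using weight_pos v_pos[OF assms(1)] u_pos p_pos[of k] by simp
  have coeff_pos: "kernel_coeff k b y i > 0" if "i \<le> k" for i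
    using weight_pos v_pos[OF assms(1)] p_pos[OF that] assms(2) by (simp add: kernel_coeff_def)
  have "[:- y, 1:] * smult C g = [:- y, 1:] * (\<Sum>i\<le>k. smult (kernel_coeff k b y i) (p i))"
    using perturbed_kernel_factorization[OF assms(1) root] unfolding quotient C_def by simp
  moreover have "[:- y, 1:] \<noteq> 0"
    by simp
  ultimately have expansion: "smult C g = (\<Sum>i\<le>k. smult (kernel_coeff k b y i) (p i))"
    using mult_left_cancel by blast
  have "g = smult (1 / C) (smult C g)"
    using \<open>C > 0\<close> by simp
  also have "\<dots> = (\<Sum>i\<le>k. smult (kernel_coeff k b y i / C) (p i))"
    unfolding expansion smult_sum_right by simp
  finally have "g = (\<Sum>i\<le>k. smult (kernel_coeff k b y i / C) (p i))" .
  then show ?thesis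
    using coeff_pos \<open>C > 0\<close> by (intro exI[of _ "\<lambda>i. kernel_coeff k b y i / C"]) simp
qed

lemma perturbed_eq_prod_roots:
  assumes mono: "strict_mono_on {1..k+1} \<beta>"
    and roots: "{t. poly (perturbed k b) t = 0} = \<beta> ` {1..k+1}"
  shows "perturbed k b = [:- \<beta> (k + 1), 1:] * smult (lead_coeff (perturbed k b)) (\<Prod>j=1..k. [:- \<beta> j, 1:])"
proof -
  have "perturbed k b = smult (lead_coeff (perturbed k b)) (\<Prod>j=1..k+1. [:- \<beta> j, 1:])"
    using roots
    by (intro poly_eq_smult_prod_distinct_roots[OF _ strict_mono_on_imp_inj_on[OF mono]])
      (auto simp: degree_perturbed)
  then show ?thesis
    by (simp add: mult.commute)
qed

theorem prod_smaller_roots_positive_expansion: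
  assumes "k \<ge> 1" and "b * u k < v k"
    and mono: "strict_mono_on {1..k+1} \<beta>"
    and roots: "{t. poly (perturbed k b) t = 0} = \<beta> ` {1..k+1}"
  shows "\<exists>cs. (\<forall>i\<le>k. cs i > 0) \<and> (\<Prod>j=1..k. [:- \<beta> j, 1:]) = (\<Sum>i\<le>k. smult (cs i) (p i))"
proof -
  define G where "G = (\<Prod>j=1..k. [:- \<beta> j, 1:])"
  define l where "l = lead_coeff (perturbed k b)"
  have "l > 0"
    using lead_coeff_p_pos[of "k + 1"] unfolding l_def lead_coeff_perturbed .
  have root: "poly (perturbed k b) (\<beta> (k + 1)) = 0"
    using roots by auto
  have largest: "t \<le> \<beta> (k + 1)" if "poly (perturbed k b) t = 0" for t
  proof -
    from that roots obtain j where "j \<in> {1..k+1}" "t = \<beta> j"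
      by blast
    then show ?thesis
      using strict_mono_on_leD[OF mono, of j "k + 1"] by simp
  qed
  obtain cs where cs_pos: "\<forall>i\<le>k. cs i > 0" and expansion: "smult l G = (\<Sum>i\<le>k. smult (cs i) (p i))"
    using quotient_positive_expansion[OF assms(1,2) root largest perturbed_eq_prod_roots[OF mono roots]]
    unfolding G_def l_def by blast
  have "G = smult (1 / l) (smult l G)"
    using \<open>l > 0\<close> by simp
  also have "\<dots> = (\<Sum>i\<le>k. smult (cs i / l) (p i))"
    unfolding expansion smult_sum_right by simp
  finally show ?thesis
    using cs_pos \<open>l > 0\<close> unfolding G_def by (intro exI[of _ "\<lambda>i. cs i / l"]) simp
qed

end

definition gegen_u :: "nat \<Rightarrow> nat \<Rightarrow> real" where
  "gegen_u n j = (real j + real n - 2) / (2 * real j + real n - 2)"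

definition gegen_v :: "nat \<Rightarrow> nat \<Rightarrow> real" where
  "gegen_v n j = real j / (2 * real j + real n - 2)"

lemma gegen_recurrence:
  assumes "n \<ge> 3"
  shows "[:0, 1:] * gegen n j = smult (gegen_u n j) (gegen n (Suc j)) + smult (gegen_v n j) (gegen n (j - 1))"
proof (cases j)
  case 0
  then show ?thesis
    using assms by (simp add: gegen_u_def gegen_v_def)
next
  case (Suc i)
  have "real (Suc i) + real n - 2 > 0" "2 * real (Suc i) + real n - 2 > 0"
    using assms by auto
  then have u1: "gegen_u n (Suc i) * (1 / (real (Suc i) + real n - 2) * (2 * real (Suc i) + real n - 2)) = 1"
    and uv: "gegen_u n (Suc i) * (1 / (real (Suc i) + real n - 2) * real (Suc i)) = gegen_v n (Suc i)"
    by (simp_all add: gegen_u_def gegen_v_def del: of_nat_Suc)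
  show ?thesis
    unfolding Suc diff_Suc_1 by (simp only: gegen.simps smult_diff_right smult_smult u1 uv smult_1_left)
qed

lemma three_term_recurrence_gegen:
  assumes "n \<ge> 3"
  shows "three_term_recurrence (gegen n) (gegen_u n) (gegen_v n)"
  using assms gegen_recurrence
  by unfold_locales (auto simp: gegen_u_def gegen_v_def intro!: divide_pos_pos)

lemma below_root_of_quadratic:
  fixes a K b c :: real
  assumes "a > 0" and "K \<ge> 1" and "c < 0"
    and prod: "b * c = - ((K + 1) * K * (a + K - 1)) / ((2 * a + K) * (2 * a + K - 1) * (a + K + 1))"
    and sum: "b + c = - (2 * a * (K + 1)^2 * (a + K - 1)) / ((2 * a + K) * (2 * a + K - 1) * (a + 2 * K + 1))"
  shows "b < K / (2 * a + K)"
proof -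
  define \<theta> where "\<theta> = K / (2 * a + K)"
  define B where "B = (K + 1)^2 * (a + K + 1) * (a + K - 1) - (a + 2 * K + 1) * (a - 1)"
  have "(a + 2 * K + 1) * (a - 1) < (K + 1)^2 * (a + K + 1) * (a + K - 1)"
  proof (cases "a \<le> 1")
    case True
    then show ?thesis
      using assms(1,2) by (smt (verit) mult_nonneg_nonpos mult_pos_pos zero_less_power)
  next
    case False
    have "a + 2 * K + 1 < (K + 1)^2 * (a + K + 1)"
      using assms(1,2) by (simp add: power2_eq_square algebra_simps) (smt (verit) mult_pos_pos)
    then show ?thesis
      using False assms(2) by (intro mult_strict_mono) auto
  qed
  then have "B > 0"
    unfolding B_def by simp
  have rational: "(K / X)^2 - (- (2 * a * (K + 1)^2 * V) / (X * Y * W)) * (K / X) + (- ((K + 1) * K * V) / (X * Y * Z))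
      = K * (K * Y * Z * W + 2 * a * (K + 1)^2 * V * Z - (K + 1) * V * X * W) / (X^2 * Y * Z * W)"
    if "X \<noteq> 0" "Y \<noteq> 0" "Z \<noteq> 0" "W \<noteq> 0" for X Y Z W V
    using that by (simp add: field_simps power2_eq_square)
  have numerator: "K * (2 * a + K - 1) * (a + K + 1) * (a + 2 * K + 1)
      + 2 * a * (K + 1)^2 * (a + K - 1) * (a + K + 1) - (K + 1) * (a + K - 1) * (2 * a + K) * (a + 2 * K + 1)
      = 2 * a * B"
    unfolding B_def by (simp add: algebra_simps power2_eq_square)
  have "(\<theta> - b) * (\<theta> - c) = \<theta>^2 - (b + c) * \<theta> + b * c"
    by (simp add: algebra_simps power2_eq_square)
  also have "\<dots> = K * (2 * a * B) / ((2 * a + K)^2 * (2 * a + K - 1) * (a + K + 1) * (a + 2 * K + 1))"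
    unfolding sum prod \<theta>_def numerator[symmetric] using assms(1,2)
    by (intro rational) linarith+
  finally have "(\<theta> - b) * (\<theta> - c) > 0"
    using assms(1,2) \<open>B > 0\<close> by (simp add: zero_less_mult_iff)
  moreover have "\<theta> - c > 0"
    unfolding \<theta>_def using assms(1,2,3) by (smt (verit) divide_pos_pos)
  ultimately show ?thesis
    unfolding \<theta>_def by (simp add: zero_less_mult_iff)
qed

lemma gegen_perturbation_bound:
  fixes n k :: nat and b c \<alpha> :: real
  assumes "n \<ge> 3" and "k \<ge> 1" and \<alpha>: "\<alpha> = real n / 2 - 1" and "c < 0"
    and "b * c = - ((real k + 1) * real k * (\<alpha> + real k - 1)) /
                  ((2 * \<alpha> + real k) * (2 * \<alpha> + real k - 1) * (\<alpha> + real k + 1))"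
    and "b + c = - (2 * \<alpha> * (real k + 1)^2 * (\<alpha> + real k - 1)) /
                  ((2 * \<alpha> + real k) * (2 * \<alpha> + real k - 1) * (\<alpha> + 2 * real k + 1))"
  shows "b * gegen_u n k < gegen_v n k"
proof -
  have "b < real k / (2 * \<alpha> + real k)"
    using assms by (intro below_root_of_quadratic[of \<alpha> "real k" c]) auto
  moreover have "gegen_v n k = real k / (2 * \<alpha> + real k) * gegen_u n k"
  proof -
    have "real k + real n - 2 > 0" and "2 * real k + real n - 2 > 0"
      using assms(1) by auto
    then have "gegen_v n k = real k / (real k + real n - 2) * gegen_u n k"
      unfolding gegen_u_def gegen_v_def by simp
    also have "real k + real n - 2 = 2 * \<alpha> + real k"
      using \<alpha> by simp
    finally show ?thesis .
  qed
  moreover have "gegen_u n k > 0"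
    using assms(1) unfolding gegen_u_def by (intro divide_pos_pos) auto
  ultimately show ?thesis
    by (metis mult_strict_right_mono)
qed

theorem lemma4p13:
  fixes n k :: nat and b c \<alpha> :: real and \<beta> :: "nat \<Rightarrow> real"
  assumes "n \<ge> 3" and "k \<ge> 1"
    and "\<alpha> = real n / 2 - 1"
    and "b > 0" and "c < 0"
    and "b * c = - ((real k + 1) * real k * (\<alpha> + real k - 1)) /
                  ((2 * \<alpha> + real k) * (2 * \<alpha> + real k - 1) * (\<alpha> + real k + 1))"
    and "b + c = - (2 * \<alpha> * (real k + 1)^2 * (\<alpha> + real k - 1)) /
                  ((2 * \<alpha> + real k) * (2 * \<alpha> + real k - 1) * (\<alpha> + 2 * real k + 1))"
    and "strict_mono_on {1..k+1} \<beta>"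
    and "{t. poly (gegen n (k + 1) + smult b (gegen n (k - 1))) t = 0} = \<beta> ` {1..k+1}"
  shows "\<exists>cs :: nat \<Rightarrow> real. (\<forall>i\<le>k. cs i > 0) \<and>
           (\<Prod>j=1..k. [:- \<beta> j, 1:]) = (\<Sum>i\<le>k. smult (cs i) (gegen n i))"
proof -
  interpret three_term_recurrence "gegen n" "gegen_u n" "gegen_v n"
    using three_term_recurrence_gegen[OF assms(1)] .
  have "b * gegen_u n k < gegen_v n k"
    using gegen_perturbation_bound[OF assms(1-3,5-7)] .
  then show ?thesis
    using prod_smaller_roots_positive_expansion[OF assms(2) _ assms(8)] assms(9)
    unfolding perturbed_def by blast
qed

end
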